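(* Let $0\le b<1$ and $0<c<1$. Let $(X,L_1,\dots,L_n)$ be jointly distributed with $X$ finitely supported and $L_i\in\{0,1\}$, and let $\pi$ be a collaborating cryptogenography protocol with full transcript $T$. Suppose that for all $i\in\{1,\dots,n\}$ and all $x$ in the support of $X$, $\Pr(L_i=1\mid X=x)=b$, and that $\Pr(L_i=1\mid T=t,X=x)\le c$ for all $i$ and all $(t,x)$ with $\Pr(T=t,X=x)>0$. Then \[ I(X;T)\le \frac{-b\log(1-c)+c\log(1-b)}{c}\,n. \]
   Context: All logarithms are base $2$. Collaborating cryptogenography protocol: there are $n$ players $\mathrm{plr}_1,\dots,\mathrm{plr}_n$; a secret $X$ (finitely supported) and indicators $L_1,\dots,L_n\in\{0,1\}$ ($L_i=1$ means $\mathrm{plr}_i$ knows $X$) have a joint distribution. A protocol $\pi$ specifies, for every possible partial transcript $t^k=(t_1,\dots,t_k)$ (the tuple of the first $k$ messages): whether communication stops; if not, which player $\mathrm{plr}_i$ sends the next message; and probability distributions $p_?$ and $(p_x)_{x}$ on a finite message set (depending on $t^k$). $\mathrm{plr}_i$ draws the next message, with fresh independent randomness, from $p_?$ if $L_i=0$ and from $p_x$ if $L_i=1$ and $X=x$. There is a number $\mathrm{length}(\pi)$ such that the protocol always stops after at most that many messages. $T$ denotes the random full transcript. *)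

theory Defs
  imports "HOL-Probability.Probability"
begin

text \<open>On partial transcript t (list of
messages sent so far) it either stops (None) or names the next speaker i together
with the distribution p_? (used if L_i = 0) and the family p_x (used if L_i = 1, X = x).\<close>
type_synonym ('x, 'm) protocol = "'m list \<Rightarrow> (nat \<times> 'm pmf \<times> ('x \<Rightarrow> 'm pmf)) option"

text \<open>Run the protocol from partial transcript t with at most k further messages,
for secret x and knowledge indicators l (l i = True means player i knows X).\<close>
fun run_protocol :: "('x, 'm) protocol \<Rightarrow> 'x \<Rightarrow> (nat \<Rightarrow> bool) \<Rightarrow> nat \<Rightarrow> 'm list \<Rightarrow> 'm list pmf" where
  "run_protocol \<pi> x l 0 t = return_pmf t"
| "run_protocol \<pi> x l (Suc k) t =
     (case \<pi> t of
        None \<Rightarrow> return_pmf t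
      | Some (i, pq, px) \<Rightarrow>
          bind_pmf (if l i then px x else pq) (\<lambda>m. run_protocol \<pi> x l k (t @ [m])))"

definition joint_XLT :: "('x \<times> (nat \<Rightarrow> bool)) pmf \<Rightarrow> ('x, 'm) protocol \<Rightarrow> nat
    \<Rightarrow> ('x \<times> (nat \<Rightarrow> bool) \<times> 'm list) pmf" where
  "joint_XLT D \<pi> N = bind_pmf D (\<lambda>(x, l). map_pmf (\<lambda>t. (x, l, t)) (run_protocol \<pi> x l N []))"

definition valid_protocol :: "nat \<Rightarrow> 'x set \<Rightarrow> 'm set \<Rightarrow> nat \<Rightarrow> ('x, 'm) protocol \<Rightarrow> bool" where
  "valid_protocol n XS M N \<pi> \<longleftrightarrow> finite M \<and>
     (\<forall>t. N \<le> length t \<longrightarrow> \<pi> t = None) \<and>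
     (\<forall>t i pq px. \<pi> t = Some (i, pq, px) \<longrightarrow>
         i \<in> {1..n} \<and> set_pmf pq \<subseteq> M \<and> (\<forall>x\<in>XS. set_pmf (px x) \<subseteq> M))"

definition mutual_info :: "('a \<times> 'b) pmf \<Rightarrow> real" where
  "mutual_info P = (\<Sum>ab\<in>set_pmf P.
      pmf P ab * log 2 (pmf P ab / (pmf (map_pmf fst P) (fst ab) * pmf (map_pmf snd P) (snd ab))))"

end

theory Submission
  imports Defs
begin

text \<open>Fix the secret \<open>x\<close> and compare the transcript distribution given \<open>X = x\<close> with the
  distribution \<open>Q\<close> of transcripts produced when nobody knows \<open>X\<close>. With
  \<open>\<psi>(w, z) = w \<cdot> ln (w / (w - z))\<close>, induction over the protocol tree shows
  \<open>D(T | X = x \<parallel> Q) \<le> \<Sum>\<^sub>t \<Sum>\<^sub>j \<psi>(P(x, t), P(x, t, L\<^sub>j)) - \<Sum>\<^sub>j \<psi>(P(x), P(x, L\<^sub>j))\<close>: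
  a message changes the speaker's \<open>\<psi>\<close>-terms by exactly the relative entropy it contributes,
  and by the log-sum inequality it can only increase those of the other players.
  Convexity of \<open>q \<mapsto> -ln (1 - q)\<close> and the posterior bound \<open>c\<close> give
  \<open>\<psi>(w, z) \<le> z \<cdot> (-ln (1 - c)) / c\<close>, while the prior \<open>b\<close> gives \<open>\<psi>(P(x), b P(x)) = -P(x) ln (1 - b)\<close>.
  Summing over the players and averaging over \<open>x\<close> bounds \<open>I(X; T)\<close>, which is at most the
  average of \<open>D(T | X = x \<parallel> Q)\<close> for any \<open>Q\<close>.\<close>

section \<open>Protocol runs\<close>

lemma run_protocol_prefix:
  "t \<in> set_pmf (run_protocol \<pi> x l k s) \<Longrightarrow> \<exists>u. t = s @ u"
proof (induction k arbitrary: s)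
  case 0 then show ?case by simp
next
  case (Suc k)
  then show ?case
    by (auto split: option.splits if_splits dest!: Suc.IH)
qed

lemma pmf_run_protocol_stop:
  assumes "\<pi> s = None \<or> k = 0"
  shows "pmf (run_protocol \<pi> x l k s) t = (if t = s then 1 else 0)"
  using assms by (cases k) (auto simp: pmf_return)

lemma pmf_run_protocol_Suc:
  assumes "\<pi> s = Some (i, pq, px)"
  shows "pmf (run_protocol \<pi> x l (Suc k) s) t =
    pmf (if l i then px x else pq) (t ! length s) * pmf (run_protocol \<pi> x l k (s @ [t ! length s])) t"
proof -
  have other: "pmf (run_protocol \<pi> x l k (s @ [m])) t = 0" if "m \<noteq> t ! length s" for m
  proof (rule ccontr)
    assume "pmf (run_protocol \<pi> x l k (s @ [m])) t \<noteq> 0"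
    then obtain u where "t = s @ m # u"
      using run_protocol_prefix[of t \<pi> x l k "s @ [m]"] by (auto simp: set_pmf_eq)
    with that show False by simp
  qed
  have "pmf (run_protocol \<pi> x l (Suc k) s) t =
      measure_pmf.expectation (if l i then px x else pq) (\<lambda>m. pmf (run_protocol \<pi> x l k (s @ [m])) t)"
    using assms by (cases "l i") (auto simp: pmf_bind)
  also have "\<dots> = pmf (if l i then px x else pq) (t ! length s) * pmf (run_protocol \<pi> x l k (s @ [t ! length s])) t"
    using other by (subst integral_measure_pmf[of "{t ! length s}"]) auto
  finally show ?thesis .
qed

lemma run_protocol_ignorant:
  "run_protocol \<pi> x (\<lambda>_. False) k s = run_protocol \<pi> y (\<lambda>_. False) k s"
  by (induction k arbitrary: s) (auto split: option.splits)

definition extensions :: "'m set \<Rightarrow> nat \<Rightarrow> 'm list \<Rightarrow> 'm list set" where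
  "extensions M k s = (\<lambda>u. s @ u) ` {u. set u \<subseteq> M \<and> length u \<le> k}"

lemma finite_extensions: "finite M \<Longrightarrow> finite (extensions M k s)"
  unfolding extensions_def using finite_lists_length_le by blast

lemma self_in_extensions: "s \<in> extensions M k s"
  unfolding extensions_def by (rule image_eqI[of _ _ "[]"]) auto

lemma self_notin_extensions_snoc: "s \<notin> extensions M k (s @ [m])"
  unfolding extensions_def by auto

lemma nth_extensions_snoc: "t \<in> extensions M k (s @ [m]) \<Longrightarrow> t ! length s = m"
  unfolding extensions_def by auto

lemma extensions_Suc: "extensions M (Suc k) s = insert s (\<Union>m\<in>M. extensions M k (s @ [m]))"
proof
  show "extensions M (Suc k) s \<subseteq> insert s (\<Union>m\<in>M. extensions M k (s @ [m]))"
  proof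
    fix t assume "t \<in> extensions M (Suc k) s"
    then obtain u where u: "t = s @ u" "set u \<subseteq> M" "length u \<le> Suc k"
      unfolding extensions_def by auto
    then show "t \<in> insert s (\<Union>m\<in>M. extensions M k (s @ [m]))"
      unfolding extensions_def by (cases u) (auto intro!: bexI image_eqI)
  qed
  show "insert s (\<Union>m\<in>M. extensions M k (s @ [m])) \<subseteq> extensions M (Suc k) s"
    using self_in_extensions unfolding extensions_def by (auto intro!: image_eqI[of _ _ "_ # _"])
qed

lemma sum_extensions_Suc:
  assumes "finite M"
  shows "(\<Sum>t\<in>extensions M (Suc k) s. f t) = f s + (\<Sum>m\<in>M. \<Sum>t\<in>extensions M k (s @ [m]). f t)"
proof -
  have "(\<Sum>t\<in>extensions M (Suc k) s. f t) = f s + (\<Sum>t\<in>(\<Union>m\<in>M. extensions M k (s @ [m])). f t)"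
    unfolding extensions_Suc using assms
    by (subst sum.insert) (auto simp: finite_extensions self_notin_extensions_snoc)
  also have "(\<Sum>t\<in>(\<Union>m\<in>M. extensions M k (s @ [m])). f t) = (\<Sum>m\<in>M. \<Sum>t\<in>extensions M k (s @ [m]). f t)"
    using assms by (intro sum.UNION_disjoint) (auto simp: finite_extensions dest: nth_extensions_snoc)
  finally show ?thesis .
qed

lemma set_pmf_run_protocol_extensions:
  assumes "\<And>t i pq px. \<pi> t = Some (i, pq, px) \<Longrightarrow> set_pmf pq \<subseteq> M \<and> set_pmf (px x) \<subseteq> M"
  shows "set_pmf (run_protocol \<pi> x l k s) \<subseteq> extensions M k s"
proof (induction k arbitrary: s)
  case 0 then show ?case by (simp add: self_in_extensions)
next
  case (Suc k)
  show ?case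
  proof (cases "\<pi> s")
    case None then show ?thesis by (simp add: self_in_extensions)
  next
    case (Some a)
    then obtain i pq px where speaker: "\<pi> s = Some (i, pq, px)" by (cases a) auto
    then have messages: "set_pmf (if l i then px x else pq) \<subseteq> M" using assms by auto
    show ?thesis
    proof
      fix t assume "t \<in> set_pmf (run_protocol \<pi> x l (Suc k) s)"
      then obtain m where "m \<in> set_pmf (if l i then px x else pq)"
        and "t \<in> set_pmf (run_protocol \<pi> x l k (s @ [m]))"
        using speaker by auto
      then show "t \<in> extensions M (Suc k) s"
        using messages Suc.IH unfolding extensions_Suc by blast
    qed
  qed
qed

section \<open>Entropy inequalities\<close>

lemma mult_ln_div_ge_diff:
  fixes p q :: real
  assumes "0 \<le> p" "0 \<le> q" "0 < p \<Longrightarrow> 0 < q"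
  shows "p - q \<le> p * ln (p / q)"
proof (cases "p = 0")
  case True then show ?thesis using assms by simp
next
  case False
  then have "0 < p" "0 < q" using assms by auto
  then have "p * ln (q / p) \<le> p * (q / p - 1)"
    by (intro mult_left_mono ln_le_minus_one) auto
  moreover have "ln (q / p) = - ln (p / q)" using \<open>0 < p\<close> \<open>0 < q\<close> by (simp add: ln_div)
  ultimately show ?thesis using \<open>0 < p\<close> by (simp add: algebra_simps)
qed

lemma gibbs_inequality:
  fixes p q :: "'t \<Rightarrow> real"
  assumes "finite B" "\<And>t. t \<in> B \<Longrightarrow> 0 \<le> p t" "\<And>t. t \<in> B \<Longrightarrow> 0 \<le> q t"
    and "\<And>t. t \<in> B \<Longrightarrow> 0 < p t \<Longrightarrow> 0 < q t" and "sum q B \<le> sum p B"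
  shows "0 \<le> (\<Sum>t\<in>B. p t * log 2 (p t / q t))"
proof -
  have "sum p B - sum q B \<le> (\<Sum>t\<in>B. p t * ln (p t / q t))"
    unfolding sum_subtractf[symmetric] using assms(2-4) by (intro sum_mono mult_ln_div_ge_diff) auto
  then have "0 \<le> (\<Sum>t\<in>B. p t * ln (p t / q t)) / ln 2"
    using assms(5) by (intro divide_nonneg_pos) auto
  also have "\<dots> = (\<Sum>t\<in>B. p t * log 2 (p t / q t))"
    by (simp add: log_def sum_divide_distrib)
  finally show ?thesis .
qed

lemma log_sum_inequality:
  fixes a b :: "'i \<Rightarrow> real"
  assumes "finite I" "\<And>m. m \<in> I \<Longrightarrow> 0 \<le> a m" "\<And>m. m \<in> I \<Longrightarrow> 0 \<le> b m"
    and "\<And>m. m \<in> I \<Longrightarrow> 0 < a m \<Longrightarrow> 0 < b m" and "0 < sum b I"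
  shows "sum a I * ln (sum a I / sum b I) \<le> (\<Sum>m\<in>I. a m * ln (a m / b m))"
proof -
  let ?A = "sum a I" and ?B = "sum b I"
  have termwise: "a m * ln (?A / ?B) + a m - b m * ?A / ?B \<le> a m * ln (a m / b m)" if m: "m \<in> I" for m
  proof (cases "a m = 0")
    case True then show ?thesis using assms m by (simp add: sum_nonneg)
  next
    case False
    then have "0 < a m" "0 < b m" using assms(2-4) m by (auto simp: less_le)
    moreover have "a m \<le> ?A" using assms(1,2) m by (intro member_le_sum) auto
    then have "0 < ?A" using \<open>0 < a m\<close> by linarith
    ultimately have "a m - b m * ?A / ?B \<le> a m * ln (a m / (b m * ?A / ?B))"
      using assms(5) by (intro mult_ln_div_ge_diff) auto
    also have "ln (a m / (b m * ?A / ?B)) = ln (a m / b m) - ln (?A / ?B)"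
      using \<open>0 < a m\<close> \<open>0 < b m\<close> \<open>0 < ?A\<close> assms(5) by (simp add: ln_div ln_mult)
    finally show ?thesis by (simp add: algebra_simps)
  qed
  have "(\<Sum>m\<in>I. a m * ln (?A / ?B) + a m - b m * ?A / ?B) = ?A * ln (?A / ?B) + ?A - ?B * ?A / ?B"
    by (simp add: sum.distrib sum_subtractf sum_distrib_right sum_divide_distrib[symmetric])
  then have "?A * ln (?A / ?B) = (\<Sum>m\<in>I. a m * ln (?A / ?B) + a m - b m * ?A / ?B)"
    using assms(5) by simp
  also have "\<dots> \<le> (\<Sum>m\<in>I. a m * ln (a m / b m))"
    by (intro sum_mono termwise)
  finally show ?thesis .
qed

lemma sum_mult_ln_div_rescale:
  fixes w q :: "'t \<Rightarrow> real"
  assumes "finite T" "\<And>t. t \<in> T \<Longrightarrow> 0 \<le> w t" "\<And>t. t \<in> T \<Longrightarrow> 0 \<le> q t"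
    and "\<And>t. t \<in> T \<Longrightarrow> 0 < w t \<Longrightarrow> 0 < y * q t"
  shows "(\<Sum>t\<in>T. w t * ln (w t / (y * q t)))
    = (\<Sum>t\<in>T. w t * ln (w t / (sum w T * q t))) + sum w T * ln (sum w T / y)"
proof -
  have termwise: "w t * ln (w t / (y * q t)) = w t * ln (w t / (sum w T * q t)) + w t * ln (sum w T / y)"
    if t: "t \<in> T" for t
  proof (cases "w t = 0")
    case False
    then have "0 < w t" using assms(2) t by (simp add: less_le)
    then have "0 < y * q t" using assms(4) t by blast
    then have "0 < q t" "0 < y" using assms(3)[OF t] by (auto simp: zero_less_mult_iff)
    have "w t \<le> sum w T" using assms(1,2) t by (intro member_le_sum) auto
    then have "0 < sum w T" using \<open>0 < w t\<close> by linarith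
    then have "ln (w t / (y * q t)) = ln (w t / (sum w T * q t)) + ln (sum w T / y)"
      using \<open>0 < w t\<close> \<open>0 < q t\<close> \<open>0 < y\<close> by (simp add: ln_div ln_mult)
    then show ?thesis by (simp add: distrib_left)
  qed simp
  show ?thesis
    by (simp add: termwise sum.distrib sum_distrib_right)
qed

lemma pmf_le_pmf_map: "pmf p a \<le> pmf (map_pmf f p) (f a)"
proof -
  have "pmf p a = measure_pmf.prob p {a}" by (simp add: measure_pmf_single)
  also have "\<dots> \<le> measure_pmf.prob p (f -` {f a})" by (intro measure_pmf.finite_measure_mono) auto
  finally show ?thesis by (simp add: pmf_map)
qed

lemma pmf_map_snd_eq_sum:
  assumes "finite A" "set_pmf P \<subseteq> A \<times> UNIV"
  shows "pmf (map_pmf snd P) t = (\<Sum>x\<in>A. pmf P (x, t))"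
proof -
  have "snd -` {t} \<inter> set_pmf P = (A \<times> {t}) \<inter> set_pmf P" using assms(2) by auto
  then have "pmf (map_pmf snd P) t = measure_pmf.prob P (A \<times> {t})"
    unfolding pmf_map by (metis measure_Int_set_pmf)
  also have "\<dots> = sum (pmf P) ((\<lambda>x. (x, t)) ` A)"
    using assms(1) by (simp add: measure_measure_pmf_finite Times_insert_right)
  also have "\<dots> = (\<Sum>x\<in>A. pmf P (x, t))"
    by (simp add: sum.reindex inj_on_def)
  finally show ?thesis .
qed

lemma relent_pmf_nonneg:
  assumes "finite B" "set_pmf p \<subseteq> B" and "\<And>t. 0 < pmf p t \<Longrightarrow> 0 < pmf q t"
  shows "0 \<le> (\<Sum>t\<in>B. pmf p t * log 2 (pmf p t / pmf q t))"
proof (rule gibbs_inequality[OF assms(1)])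
  have "sum (pmf q) B \<le> 1"
    using assms(1) by (metis measure_measure_pmf_finite measure_pmf.prob_le_1)
  then show "sum (pmf q) B \<le> sum (pmf p) B"
    using sum_pmf_eq_1[OF assms(1,2)] by simp
qed (use assms(3) in auto)

lemma mutual_info_eq_sum:
  assumes "finite A" "finite B" "set_pmf P \<subseteq> A \<times> B"
  shows "mutual_info P = (\<Sum>x\<in>A. \<Sum>t\<in>B. pmf P (x, t)
    * log 2 (pmf P (x, t) / (pmf (map_pmf fst P) x * pmf (map_pmf snd P) t)))"
proof -
  have "mutual_info P = (\<Sum>xt\<in>A \<times> B. pmf P xt
      * log 2 (pmf P xt / (pmf (map_pmf fst P) (fst xt) * pmf (map_pmf snd P) (snd xt))))"
    unfolding mutual_info_def using assms by (intro sum.mono_neutral_left) (auto simp: pmf_eq_0_set_pmf)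
  then show ?thesis
    unfolding sum.cartesian_product by (simp add: case_prod_beta)
qed

lemma mutual_info_le_relent:
  fixes P :: "('a \<times> 'b) pmf" and Q :: "'b pmf"
  assumes "finite A" "finite B" "set_pmf P \<subseteq> A \<times> B"
    and dominated: "\<And>x t. 0 < pmf P (x, t) \<Longrightarrow> 0 < pmf Q t"
  shows "mutual_info P
    \<le> (\<Sum>x\<in>A. \<Sum>t\<in>B. pmf P (x, t) * log 2 (pmf P (x, t) / (pmf (map_pmf fst P) x * pmf Q t)))"
proof -
  let ?p = "\<lambda>x t. pmf P (x, t)" and ?X = "pmf (map_pmf fst P)" and ?T = "pmf (map_pmf snd P)"
  have T_sum: "?T t = (\<Sum>x\<in>A. ?p x t)" for t
    using assms(1,3) by (intro pmf_map_snd_eq_sum) auto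
  have split: "?p x t * log 2 (?p x t / (?X x * ?T t))
      = ?p x t * log 2 (?p x t / (?X x * pmf Q t)) - ?p x t * log 2 (?T t / pmf Q t)" for x t
  proof (cases "?p x t = 0")
    case False
    then have "0 < ?p x t" by (simp add: less_le)
    moreover have "?p x t \<le> ?X x" "?p x t \<le> ?T t"
      using pmf_le_pmf_map[of P "(x, t)" fst] pmf_le_pmf_map[of P "(x, t)" snd] by simp_all
    moreover have "0 < pmf Q t" using dominated \<open>0 < ?p x t\<close> .
    ultimately show ?thesis
      by (simp add: log_divide log_mult algebra_simps)
  qed simp
  have "0 \<le> (\<Sum>t\<in>B. ?T t * log 2 (?T t / pmf Q t))"
  proof (rule relent_pmf_nonneg[OF assms(2)])
    show "set_pmf (map_pmf snd P) \<subseteq> B" using assms(3) by auto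
    show "0 < pmf Q t" if "0 < ?T t" for t
    proof -
      obtain x where "0 < ?p x t"
        using \<open>0 < ?T t\<close> unfolding T_sum by (metis not_le sum_nonpos pmf_nonneg)
      then show ?thesis by (rule dominated)
    qed
  qed
  then show ?thesis
    unfolding mutual_info_eq_sum[OF assms(1-3)] split sum_subtractf
    by (simp add: T_sum sum_distrib_right sum.swap[of _ A])
qed

section \<open>The potential \<open>psi\<close>\<close>

text \<open>Written as \<open>-w \<cdot> ln (1 - z / w)\<close> rather than \<open>w \<cdot> ln (w / (w - z))\<close> (\<open>psi_eq\<close>), so that
  \<open>x / 0 = 0\<close> yields \<open>psi 0 z = 0\<close>, the value needed at unreachable transcripts.\<close>
definition psi :: "real \<Rightarrow> real \<Rightarrow> real" where
  "psi w z = - w * ln (1 - z / w)"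

lemma psi_zero [simp]: "psi 0 z = 0"
  by (simp add: psi_def)

lemma psi_mult_left: "psi w (b * w) = - w * ln (1 - b)"
  by (cases "w = 0") (simp_all add: psi_def)

lemma psi_eq:
  assumes "0 \<le> w" "0 < w \<Longrightarrow> z < w"
  shows "psi w z = w * ln (w / (w - z))"
proof (cases "w = 0")
  case False
  then have "0 < w" "z < w" using assms by auto
  then have "1 - z / w = (w - z) / w" by (simp add: field_simps)
  then have "- ln (1 - z / w) = ln (w / (w - z))" using \<open>0 < w\<close> \<open>z < w\<close> by (simp add: ln_div)
  then show ?thesis by (metis psi_def mult_minus_left mult_minus_right)
qed simp

lemma less_if_le_mult:
  fixes z w c :: real
  shows "z \<le> c * w \<Longrightarrow> c < 1 \<Longrightarrow> 0 < w \<Longrightarrow> z < w"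
  using mult_less_cancel_right2[of c w] by linarith

lemma psi_le_linear:
  assumes "0 \<le> z" "z \<le> c * w" "0 < c" "c < 1"
  shows "psi w z \<le> z / c * - ln (1 - c)"
proof (cases "w = 0")
  case True then show ?thesis using assms by simp
next
  case False
  have "0 \<le> c * w" using assms by linarith
  then have "0 < w" using False \<open>0 < c\<close> by (simp add: zero_le_mult_iff less_le)
  let ?q = "z / w"
  have "0 \<le> ?q" "?q \<le> c" using assms \<open>0 < w\<close> by (auto simp: divide_le_eq mult.commute)
  have "(1 - ?q / c) * ln 1 + (?q / c) * ln (1 - c) \<le> ln ((1 - ?q / c) *\<^sub>R 1 + (?q / c) *\<^sub>R (1 - c))"
    using assms \<open>0 < w\<close> \<open>0 \<le> ?q\<close> \<open>?q \<le> c\<close> by (intro concave_onD[OF ln_concave]) (auto simp: field_simps)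
  also have "(1 - ?q / c) *\<^sub>R 1 + (?q / c) *\<^sub>R (1 - c) = 1 - ?q"
    using assms \<open>0 < w\<close> by (simp add: field_simps)
  finally have "- ln (1 - ?q) \<le> ?q / c * - ln (1 - c)" by simp
  then have "w * - ln (1 - ?q) \<le> w * (?q / c * - ln (1 - c))"
    using \<open>0 < w\<close> by (intro mult_left_mono) auto
  then show ?thesis using \<open>0 < w\<close> by (simp add: psi_def)
qed

lemma psi_sum_le:
  assumes "finite M" "\<And>m. m \<in> M \<Longrightarrow> 0 \<le> A m" "\<And>m. m \<in> M \<Longrightarrow> B m \<le> c * A m" "c < 1"
  shows "psi (sum A M) (sum B M) \<le> (\<Sum>m\<in>M. psi (A m) (B m))"
proof (cases "sum A M = 0")
  case True
  then show ?thesis using assms by (simp add: sum_nonneg_eq_0_iff)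
next
  case False
  then have "0 < sum A M" using assms(2) by (simp add: less_le sum_nonneg)
  have "sum B M \<le> c * sum A M"
    using assms(3) by (simp add: sum_distrib_left sum_mono)
  then have "sum B M < sum A M" using less_if_le_mult[OF _ assms(4) \<open>0 < sum A M\<close>] by blast
  have "psi (sum A M) (sum B M) = sum A M * ln (sum A M / (sum A M - sum B M))"
    using \<open>0 < sum A M\<close> \<open>sum B M < sum A M\<close> by (intro psi_eq) auto
  also have "\<dots> = sum A M * ln (sum A M / (\<Sum>m\<in>M. A m - B m))"
    by (simp add: sum_subtractf)
  also have "\<dots> \<le> (\<Sum>m\<in>M. A m * ln (A m / (A m - B m)))"
  proof (rule log_sum_inequality)
    show "0 \<le> A m - B m" if "m \<in> M" for m
      using mult_right_mono[of c 1 "A m"] assms(2,3)[OF that] assms(4) by simp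
    show "0 < A m - B m" if "m \<in> M" "0 < A m" for m
      using less_if_le_mult[OF assms(3)[OF that(1)] assms(4) that(2)] by simp
  qed (use assms \<open>sum B M < sum A M\<close> in \<open>auto simp: sum_subtractf\<close>)
  also have "\<dots> = (\<Sum>m\<in>M. psi (A m) (B m))"
    using assms(2) less_if_le_mult[OF assms(3) assms(4)] by (intro sum.cong refl psi_eq[symmetric]) auto
  finally show ?thesis .
qed

lemma psi_sum_speaker:
  assumes "finite M" "\<And>m. m \<in> M \<Longrightarrow> 0 \<le> A m" "\<And>m. m \<in> M \<Longrightarrow> B m \<le> c * A m" "c < 1"
    and "\<And>m. m \<in> M \<Longrightarrow> A m - B m = p m * (sum A M - sum B M)"
  shows "(\<Sum>m\<in>M. psi (A m) (B m)) = (\<Sum>m\<in>M. A m * ln (A m / (sum A M * p m))) + psi (sum A M) (sum B M)"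
proof -
  let ?Z = "sum A M" and ?z = "sum B M"
  have "?z \<le> c * ?Z" using assms(3) by (simp add: sum_distrib_left sum_mono)
  then have "?z < ?Z" if "0 < ?Z" using less_if_le_mult[OF _ assms(4) that] by blast
  have termwise: "psi (A m) (B m) = A m * ln (A m / (?Z * p m)) + A m * ln (?Z / (?Z - ?z))"
    if m: "m \<in> M" for m
  proof (cases "A m = 0")
    case False
    then have "0 < A m" using assms(2) m by (simp add: less_le)
    then have "B m < A m" using less_if_le_mult[OF assms(3)[OF m] assms(4)] by blast
    have "A m \<le> ?Z" using assms(1,2) m by (intro member_le_sum) auto
    then have "0 < ?Z" using \<open>0 < A m\<close> by linarith
    then have "0 < ?Z - ?z" using \<open>0 < ?Z \<Longrightarrow> ?z < ?Z\<close> by simp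
    have "0 < p m * (?Z - ?z)" using assms(5)[OF m] \<open>B m < A m\<close> by simp
    then have "0 < p m" using \<open>0 < ?Z - ?z\<close> by (simp add: zero_less_mult_iff)
    have "psi (A m) (B m) = A m * ln (A m / (p m * (?Z - ?z)))"
      using \<open>0 < A m\<close> \<open>B m < A m\<close> assms(5)[OF m] by (simp add: psi_eq)
    also have "ln (A m / (p m * (?Z - ?z))) = ln (A m / (?Z * p m)) + ln (?Z / (?Z - ?z))"
      using \<open>0 < A m\<close> \<open>0 < p m\<close> \<open>0 < ?Z\<close> \<open>0 < ?Z - ?z\<close> by (simp add: ln_div ln_mult)
    finally show ?thesis by (simp add: distrib_left)
  qed simp
  have "(\<Sum>m\<in>M. psi (A m) (B m)) = (\<Sum>m\<in>M. A m * ln (A m / (?Z * p m))) + ?Z * ln (?Z / (?Z - ?z))"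
    by (simp add: termwise sum.distrib sum_distrib_right)
  also have "?Z * ln (?Z / (?Z - ?z)) = psi ?Z ?z"
    using assms(2) \<open>0 < ?Z \<Longrightarrow> ?z < ?Z\<close> by (simp add: psi_eq sum_nonneg)
  finally show ?thesis .
qed

lemma one_message_inequality:
  fixes A :: "'m \<Rightarrow> real" and B :: "nat \<Rightarrow> 'm \<Rightarrow> real"
  assumes "finite M" "finite J" "i \<in> J" "c < 1"
    and "\<And>m. m \<in> M \<Longrightarrow> 0 \<le> A m" "\<And>j m. j \<in> J \<Longrightarrow> m \<in> M \<Longrightarrow> B j m \<le> c * A m"
    and "\<And>m. m \<in> M \<Longrightarrow> A m - B i m = p m * (sum A M - sum (B i) M)"
  shows "(\<Sum>m\<in>M. A m * ln (A m / (sum A M * p m))) + (\<Sum>j\<in>J. psi (sum A M) (sum (B j) M))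
    \<le> (\<Sum>j\<in>J. \<Sum>m\<in>M. psi (A m) (B j m))"
proof -
  have "(\<Sum>m\<in>M. A m * ln (A m / (sum A M * p m))) + (\<Sum>j\<in>J. psi (sum A M) (sum (B j) M))
      = (\<Sum>m\<in>M. psi (A m) (B i m)) + (\<Sum>j\<in>J - {i}. psi (sum A M) (sum (B j) M))"
    using assms psi_sum_speaker[of M A "B i" c p] by (simp add: sum.remove)
  also have "\<dots> \<le> (\<Sum>m\<in>M. psi (A m) (B i m)) + (\<Sum>j\<in>J - {i}. \<Sum>m\<in>M. psi (A m) (B j m))"
    using assms by (intro add_left_mono sum_mono psi_sum_le) auto
  also have "\<dots> = (\<Sum>j\<in>J. \<Sum>m\<in>M. psi (A m) (B j m))"
    using assms(2,3) by (simp add: sum.remove)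
  finally show ?thesis .
qed

section \<open>Weighted transcripts\<close>

text \<open>Instead of conditioning on events the induction over the protocol
  tree works with weights \<open>g a \<in> [0, 1]\<close>, which it multiplies by message probabilities.\<close>
locale protocol_run =
  fixes \<pi> :: "('x, 'm) protocol" and x :: 'x and n :: nat and M :: "'m set"
    and E :: "'a pmf" and L :: "'a \<Rightarrow> nat \<Rightarrow> bool"
  assumes finite_messages: "finite M"
    and speaker: "\<And>t i pq px. \<pi> t = Some (i, pq, px) \<Longrightarrow>
      i \<in> {1..n} \<and> set_pmf pq \<subseteq> M \<and> set_pmf (px x) \<subseteq> M"
begin

definition weight :: "('a \<Rightarrow> real) \<Rightarrow> bool" where
  "weight g \<longleftrightarrow> (\<forall>a. 0 \<le> g a \<and> g a \<le> 1)"

abbreviation mass :: "('a \<Rightarrow> real) \<Rightarrow> real" where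
  "mass g \<equiv> \<integral>a. g a \<partial>E"

definition weighted_pmf :: "('a \<Rightarrow> real) \<Rightarrow> nat \<Rightarrow> 'm list \<Rightarrow> 'm list \<Rightarrow> real" where
  "weighted_pmf g k s t = (\<integral>a. g a * pmf (run_protocol \<pi> x (L a) k s) t \<partial>E)"

definition knower_part :: "('a \<Rightarrow> real) \<Rightarrow> nat \<Rightarrow> 'a \<Rightarrow> real" where
  "knower_part g j a = (if L a j then g a else 0)"

definition message_part :: "nat \<Rightarrow> 'm pmf \<Rightarrow> ('x \<Rightarrow> 'm pmf) \<Rightarrow> 'm \<Rightarrow> ('a \<Rightarrow> real) \<Rightarrow> 'a \<Rightarrow> real" where
  "message_part i pq px m g a = g a * pmf (if L a i then px x else pq) m"

abbreviation ignorant_run :: "nat \<Rightarrow> 'm list \<Rightarrow> 'm list pmf" where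
  "ignorant_run k s \<equiv> run_protocol \<pi> x (\<lambda>_. False) k s"

definition knowledge_bounded :: "real \<Rightarrow> nat \<Rightarrow> 'm list \<Rightarrow> ('a \<Rightarrow> real) \<Rightarrow> bool" where
  "knowledge_bounded c k s g \<longleftrightarrow> (\<forall>t\<in>extensions M k s. \<forall>j\<in>{1..n}.
     weighted_pmf (knower_part g j) k s t \<le> c * weighted_pmf g k s t)"

definition transcript_relent :: "nat \<Rightarrow> 'm list \<Rightarrow> ('a \<Rightarrow> real) \<Rightarrow> real" where
  "transcript_relent k s g = (\<Sum>t\<in>extensions M k s.
     weighted_pmf g k s t * ln (weighted_pmf g k s t / (mass g * pmf (ignorant_run k s) t)))"

definition transcript_psi :: "nat \<Rightarrow> 'm list \<Rightarrow> ('a \<Rightarrow> real) \<Rightarrow> real" where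
  "transcript_psi k s g = (\<Sum>t\<in>extensions M k s. \<Sum>j\<in>{1..n}.
     psi (weighted_pmf g k s t) (weighted_pmf (knower_part g j) k s t))"

definition prior_psi :: "('a \<Rightarrow> real) \<Rightarrow> real" where
  "prior_psi g = (\<Sum>j\<in>{1..n}. psi (mass g) (mass (knower_part g j)))"

lemma weight_knower_part: "weight g \<Longrightarrow> weight (knower_part g j)"
  unfolding weight_def knower_part_def by auto

lemma weight_message_part: "weight g \<Longrightarrow> weight (message_part i pq px m g)"
  unfolding weight_def message_part_def by (auto intro: mult_le_one pmf_le_1)

lemma integrable_weight: "weight g \<Longrightarrow> integrable E g"
  unfolding weight_def by (intro measure_pmf.integrable_const_bound[where B=1]) auto

lemma integrable_weighted_pmf:
  "weight g \<Longrightarrow> integrable E (\<lambda>a. g a * pmf (run_protocol \<pi> x (L a) k s) t)"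
  unfolding weight_def
  by (intro measure_pmf.integrable_const_bound[where B=1] AE_I2)
    (auto simp: abs_mult intro!: mult_le_one pmf_le_1)

lemma mass_nonneg: "weight g \<Longrightarrow> 0 \<le> mass g"
  unfolding weight_def by (intro integral_nonneg_AE) auto

lemma weighted_pmf_nonneg: "weight g \<Longrightarrow> 0 \<le> weighted_pmf g k s t"
  unfolding weighted_pmf_def weight_def by (intro integral_nonneg_AE) auto

lemma weighted_pmf_diff:
  "weight g \<Longrightarrow> weight h \<Longrightarrow>
    weighted_pmf (\<lambda>a. g a - h a) k s t = weighted_pmf g k s t - weighted_pmf h k s t"
  unfolding weighted_pmf_def left_diff_distrib by (intro Bochner_Integration.integral_diff integrable_weighted_pmf)

lemma set_pmf_run_protocol_subset: "set_pmf (run_protocol \<pi> x l k s) \<subseteq> extensions M k s"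
  by (rule set_pmf_run_protocol_extensions) (use speaker in blast)

lemma weighted_pmf_eq_0:
  assumes "t \<notin> extensions M k s"
  shows "weighted_pmf g k s t = 0"
proof -
  have "pmf (run_protocol \<pi> x l k s) t = 0" for l
    using assms set_pmf_run_protocol_subset by (auto simp: pmf_eq_0_set_pmf)
  then show ?thesis by (simp add: weighted_pmf_def)
qed

lemma sum_weighted_pmf: "weight g \<Longrightarrow> (\<Sum>t\<in>extensions M k s. weighted_pmf g k s t) = mass g"
proof -
  assume "weight g"
  have "(\<Sum>t\<in>extensions M k s. weighted_pmf g k s t)
      = (\<integral>a. g a * (\<Sum>t\<in>extensions M k s. pmf (run_protocol \<pi> x (L a) k s) t) \<partial>E)"
    unfolding weighted_pmf_def sum_distrib_left
    by (intro Bochner_Integration.integral_sum[symmetric] integrable_weighted_pmf \<open>weight g\<close>)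
  also have "\<dots> = mass g"
    by (simp add: sum_pmf_eq_1 finite_extensions finite_messages set_pmf_run_protocol_subset)
  finally show ?thesis .
qed

lemma weighted_pmf_le_mass: "weight g \<Longrightarrow> weighted_pmf g k s t \<le> mass g"
proof (cases "t \<in> extensions M k s")
  case True
  assume "weight g"
  then have "weighted_pmf g k s t \<le> (\<Sum>t\<in>extensions M k s. weighted_pmf g k s t)"
    using True by (intro member_le_sum weighted_pmf_nonneg finite_extensions finite_messages)
  then show ?thesis using sum_weighted_pmf \<open>weight g\<close> by simp
qed (simp add: weighted_pmf_eq_0 mass_nonneg)

lemma weighted_pmf_stop:
  "\<pi> s = None \<or> k = 0 \<Longrightarrow> weighted_pmf g k s t = (if t = s then mass g else 0)"
  unfolding weighted_pmf_def by (simp add: pmf_run_protocol_stop)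

lemma weighted_pmf_Suc:
  assumes "\<pi> s = Some (i, pq, px)"
  shows "weighted_pmf g (Suc k) s t
    = weighted_pmf (message_part i pq px (t ! length s) g) k (s @ [t ! length s]) t"
  unfolding weighted_pmf_def message_part_def pmf_run_protocol_Suc[where \<pi>=\<pi> and s=s, OF assms] by (simp add: mult.assoc)

lemma weighted_pmf_Suc_self:
  "\<pi> s = Some (i, pq, px) \<Longrightarrow> weighted_pmf g (Suc k) s s = 0"
  by (simp add: weighted_pmf_Suc weighted_pmf_eq_0 self_notin_extensions_snoc)

lemma weighted_pmf_Suc_snoc:
  assumes "\<pi> s = Some (i, pq, px)" "t \<in> extensions M k (s @ [m])"
  shows "weighted_pmf g (Suc k) s t = weighted_pmf (message_part i pq px m g) k (s @ [m]) t"
  unfolding weighted_pmf_Suc[OF assms(1)] nth_extensions_snoc[OF assms(2)] ..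

lemma pmf_ignorant_run_Suc_snoc:
  assumes "\<pi> s = Some (i, pq, px)" "t \<in> extensions M k (s @ [m])"
  shows "pmf (ignorant_run (Suc k) s) t = pmf pq m * pmf (ignorant_run k (s @ [m])) t"
  unfolding pmf_run_protocol_Suc[where \<pi>=\<pi> and s=s, OF assms(1)] nth_extensions_snoc[OF assms(2)]
  by simp

lemma knower_part_message_part:
  "knower_part (message_part i pq px m g) j = message_part i pq px m (knower_part g j)"
  unfolding knower_part_def message_part_def by auto

text \<open>Only players who do not know the secret use \<open>pq\<close>, so subtracting the knowers of the speaker
  turns the message probability into a common factor.\<close>
lemma message_part_minus_knower_part:
  "message_part i pq px m g a - message_part i pq px m (knower_part g i) a
    = pmf pq m * (g a - knower_part g i a)"
  unfolding knower_part_def message_part_def by auto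

lemma sum_mass_message_part:
  assumes "\<pi> s = Some (i, pq, px)" "weight g"
  shows "(\<Sum>m\<in>M. mass (message_part i pq px m g)) = mass g"
proof -
  have "(\<Sum>m\<in>M. mass (message_part i pq px m g))
      = (\<integral>a. g a * (\<Sum>m\<in>M. pmf (if L a i then px x else pq) m) \<partial>E)"
    unfolding message_part_def sum_distrib_left using assms(2)
    by (intro Bochner_Integration.integral_sum[symmetric] integrable_weight weight_message_part[unfolded message_part_def])
  also have "\<dots> = mass g"
    using speaker[OF assms(1)] by (simp add: sum_pmf_eq_1 finite_messages)
  finally show ?thesis .
qed

lemma knowledge_bounded_message_part:
  assumes "\<pi> s = Some (i, pq, px)" "knowledge_bounded c (Suc k) s g" "m \<in> M"
  shows "knowledge_bounded c k (s @ [m]) (message_part i pq px m g)"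
  unfolding knowledge_bounded_def
proof (intro ballI)
  fix t j assume t: "t \<in> extensions M k (s @ [m])" and j: "j \<in> {1..n}"
  then have "t \<in> extensions M (Suc k) s" using assms(3) unfolding extensions_Suc by blast
  then have "weighted_pmf (knower_part g j) (Suc k) s t \<le> c * weighted_pmf g (Suc k) s t"
    using assms(2) j unfolding knowledge_bounded_def by blast
  then show "weighted_pmf (knower_part (message_part i pq px m g) j) k (s @ [m]) t
      \<le> c * weighted_pmf (message_part i pq px m g) k (s @ [m]) t"
    by (simp add: weighted_pmf_Suc[OF assms(1)] nth_extensions_snoc[OF t] knower_part_message_part)
qed

lemma mass_knower_part_le:
  assumes "weight g" "knowledge_bounded c k s g" "j \<in> {1..n}"
  shows "mass (knower_part g j) \<le> c * mass g"
proof -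
  have "mass (knower_part g j) = (\<Sum>t\<in>extensions M k s. weighted_pmf (knower_part g j) k s t)"
    using assms(1) by (simp add: sum_weighted_pmf weight_knower_part)
  also have "\<dots> \<le> (\<Sum>t\<in>extensions M k s. c * weighted_pmf g k s t)"
    using assms(2,3) unfolding knowledge_bounded_def by (intro sum_mono) auto
  also have "\<dots> = c * mass g"
    using assms(1) by (simp add: sum_weighted_pmf flip: sum_distrib_left)
  finally show ?thesis .
qed

text \<open>Since the knowers of the speaker carry at most a fraction \<open>c < 1\<close> of the weight, a
  reachable message must have positive probability under the ignorant distribution \<open>pq\<close>.\<close>
lemma pmf_ignorant_message_pos:
  assumes speaks: "\<pi> s = Some (i, pq, px)" and "c < 1" "weight g" "knowledge_bounded c (Suc k) s g"
    and m: "m \<in> M" and t: "t \<in> extensions M k (s @ [m])" and pos: "0 < weighted_pmf g (Suc k) s t"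
  shows "0 < pmf pq m"
proof -
  have "i \<in> {1..n}" using speaker[OF speaks] by blast
  moreover have "t \<in> extensions M (Suc k) s" using m t unfolding extensions_Suc by blast
  ultimately have "weighted_pmf (knower_part g i) (Suc k) s t \<le> c * weighted_pmf g (Suc k) s t"
    using assms(4) unfolding knowledge_bounded_def by blast
  then have "0 < weighted_pmf g (Suc k) s t - weighted_pmf (knower_part g i) (Suc k) s t"
    using less_if_le_mult[OF _ assms(2) pos] by simp
  also have "\<dots> = weighted_pmf (message_part i pq px m g) k (s @ [m]) t
      - weighted_pmf (message_part i pq px m (knower_part g i)) k (s @ [m]) t"
    by (simp add: weighted_pmf_Suc_snoc[OF speaks t] knower_part_message_part)
  also have "\<dots> = weighted_pmf (\<lambda>a. pmf pq m * (g a - knower_part g i a)) k (s @ [m]) t"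
    using weighted_pmf_diff[of "message_part i pq px m g" "message_part i pq px m (knower_part g i)"]
      assms(3)
    by (simp add: weight_message_part weight_knower_part message_part_minus_knower_part)
  also have "\<dots> = pmf pq m * weighted_pmf (\<lambda>a. g a - knower_part g i a) k (s @ [m]) t"
    by (simp add: weighted_pmf_def mult.assoc)
  finally show ?thesis by (simp add: zero_less_mult_iff less_le)
qed

lemma ignorant_run_pos:
  assumes "c < 1" "weight g" "knowledge_bounded c k s g" "0 < weighted_pmf g k s t"
  shows "0 < pmf (ignorant_run k s) t"
  using assms(2-4)
proof (induction k arbitrary: s g)
  case 0
  then show ?case by (simp add: weighted_pmf_stop pmf_run_protocol_stop split: if_splits)
next
  case (Suc k)
  show ?case
  proof (cases "\<pi> s")
    case None
    then show ?thesis using Suc.prems by (simp add: weighted_pmf_stop pmf_run_protocol_stop split: if_splits)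
  next
    case (Some a)
    then obtain i pq px where speaks: "\<pi> s = Some (i, pq, px)" by (cases a) auto
    have "t \<in> extensions M (Suc k) s" "t \<noteq> s"
      using Suc.prems(3) weighted_pmf_eq_0 weighted_pmf_Suc_self[OF speaks] by force+
    then obtain m where m: "m \<in> M" and t: "t \<in> extensions M k (s @ [m])"
      unfolding extensions_Suc by blast
    have "0 < pmf (ignorant_run k (s @ [m])) t"
    proof (rule Suc.IH)
      show "weight (message_part i pq px m g)" using Suc.prems(1) by (rule weight_message_part)
      show "knowledge_bounded c k (s @ [m]) (message_part i pq px m g)"
        using knowledge_bounded_message_part[OF speaks Suc.prems(2) m] .
      show "0 < weighted_pmf (message_part i pq px m g) k (s @ [m]) t"
        using Suc.prems(3) by (simp add: weighted_pmf_Suc_snoc[OF speaks t])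
    qed
    moreover have "0 < pmf pq m"
      using pmf_ignorant_message_pos[OF speaks assms(1) Suc.prems(1,2) m t Suc.prems(3)] .
    ultimately show ?thesis unfolding pmf_ignorant_run_Suc_snoc[OF speaks t] by simp
  qed
qed

lemma transcript_stop:
  assumes "\<pi> s = None \<or> k = 0"
  shows "transcript_relent k s g = 0" and "transcript_psi k s g = prior_psi g"
proof -
  have sum_at_self: "(\<Sum>t\<in>extensions M k s. f t) = f s" if "\<And>t. t \<noteq> s \<Longrightarrow> f t = 0" for f :: "'m list \<Rightarrow> real"
    using that by (simp add: sum.remove[OF finite_extensions[OF finite_messages] self_in_extensions])
  show "transcript_relent k s g = 0"
    unfolding transcript_relent_def
    by (subst sum_at_self) (simp_all add: assms weighted_pmf_stop pmf_run_protocol_stop)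
  show "transcript_psi k s g = prior_psi g"
    unfolding transcript_psi_def prior_psi_def
    by (subst sum_at_self) (simp_all add: assms weighted_pmf_stop)
qed

lemma transcript_psi_Suc:
  assumes "\<pi> s = Some (i, pq, px)"
  shows "transcript_psi (Suc k) s g = (\<Sum>m\<in>M. transcript_psi k (s @ [m]) (message_part i pq px m g))"
  unfolding transcript_psi_def sum_extensions_Suc[OF finite_messages]
  by (auto simp: weighted_pmf_Suc_self[OF assms] weighted_pmf_Suc_snoc[OF assms]
      knower_part_message_part intro!: sum.cong)

lemma transcript_relent_Suc:
  assumes speaks: "\<pi> s = Some (i, pq, px)" and "c < 1" "weight g" "knowledge_bounded c (Suc k) s g"
  shows "transcript_relent (Suc k) s g = (\<Sum>m\<in>M. transcript_relent k (s @ [m]) (message_part i pq px m g)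
    + mass (message_part i pq px m g) * ln (mass (message_part i pq px m g) / (mass g * pmf pq m)))"
proof -
  let ?g = "\<lambda>m. message_part i pq px m g"
  let ?W = "\<lambda>m. weighted_pmf (?g m) k (s @ [m])"
  have Suc_eq: "weighted_pmf g (Suc k) s t = ?W m t"
    "pmf (ignorant_run (Suc k) s) t = pmf pq m * pmf (ignorant_run k (s @ [m])) t"
    if "t \<in> extensions M k (s @ [m])" for m t
    using weighted_pmf_Suc_snoc[OF speaks that] pmf_ignorant_run_Suc_snoc[OF speaks that] .
  have "transcript_relent (Suc k) s g = (\<Sum>m\<in>M. \<Sum>t\<in>extensions M k (s @ [m]).
      ?W m t * ln (?W m t / ((mass g * pmf pq m) * pmf (ignorant_run k (s @ [m])) t)))"
    unfolding transcript_relent_def sum_extensions_Suc[OF finite_messages]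
    by (auto simp: weighted_pmf_Suc_self[OF speaks] Suc_eq mult.assoc simp del: run_protocol.simps
        intro!: sum.cong)
  also have "\<dots> = (\<Sum>m\<in>M. transcript_relent k (s @ [m]) (?g m)
      + mass (?g m) * ln (mass (?g m) / (mass g * pmf pq m)))"
  proof (intro sum.cong refl)
    fix m assume m: "m \<in> M"
    have "0 < (mass g * pmf pq m) * pmf (ignorant_run k (s @ [m])) t"
      if t: "t \<in> extensions M k (s @ [m])" and pos: "0 < ?W m t" for t
    proof -
      have "0 < weighted_pmf g (Suc k) s t" using pos Suc_eq(1)[OF t] by simp
      then have "0 < mass g" "0 < pmf (ignorant_run (Suc k) s) t"
        using weighted_pmf_le_mass[OF assms(3)] ignorant_run_pos[OF assms(2-4)] by (auto intro: less_le_trans)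
      then show ?thesis using Suc_eq(2)[OF t] by (simp add: mult.assoc)
    qed
    then show "(\<Sum>t\<in>extensions M k (s @ [m]).
        ?W m t * ln (?W m t / ((mass g * pmf pq m) * pmf (ignorant_run k (s @ [m])) t)))
      = transcript_relent k (s @ [m]) (?g m) + mass (?g m) * ln (mass (?g m) / (mass g * pmf pq m))"
      unfolding transcript_relent_def
      using sum_mult_ln_div_rescale[of "extensions M k (s @ [m])" "?W m"]
        sum_weighted_pmf[OF weight_message_part[OF assms(3)]]
      by (simp add: finite_extensions finite_messages weighted_pmf_nonneg weight_message_part assms(3))
  qed
  finally show ?thesis .
qed

lemma transcript_invariant_Suc:
  assumes speaks: "\<pi> s = Some (i, pq, px)" and "c < 1" "weight g" "knowledge_bounded c (Suc k) s g"
    and IH: "\<And>m. m \<in> M \<Longrightarrow> transcript_relent k (s @ [m]) (message_part i pq px m g)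
      + prior_psi (message_part i pq px m g) \<le> transcript_psi k (s @ [m]) (message_part i pq px m g)"
  shows "transcript_relent (Suc k) s g + prior_psi g \<le> transcript_psi (Suc k) s g"
proof -
  define A where "A m = mass (message_part i pq px m g)" for m
  define B where "B j m = mass (message_part i pq px m (knower_part g j))" for j m
  have sum_A: "sum A M = mass g" and sum_B: "sum (B j) M = mass (knower_part g j)" for j
    unfolding A_def B_def using assms(3) by (simp_all add: sum_mass_message_part[OF speaks] weight_knower_part)
  have "(\<Sum>m\<in>M. A m * ln (A m / (sum A M * pmf pq m))) + (\<Sum>j\<in>{1..n}. psi (sum A M) (sum (B j) M))
      \<le> (\<Sum>j\<in>{1..n}. \<Sum>m\<in>M. psi (A m) (B j m))"
  proof (rule one_message_inequality[OF finite_messages finite_atLeastAtMost _ assms(2)])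
    show "i \<in> {1..n}" using speaker[OF speaks] by blast
    show "0 \<le> A m" for m unfolding A_def by (intro mass_nonneg weight_message_part assms(3))
    show "B j m \<le> c * A m" if "j \<in> {1..n}" "m \<in> M" for j m
      unfolding A_def B_def knower_part_message_part[symmetric]
      using that knowledge_bounded_message_part[OF speaks assms(4)]
      by (intro mass_knower_part_le weight_message_part assms(3)) auto
    show "A m - B i m = pmf pq m * (sum A M - sum (B i) M)" for m
      unfolding A_def B_def sum_A sum_B
      using assms(3) integrable_weight weight_message_part weight_knower_part
      by (simp add: message_part_minus_knower_part flip: Bochner_Integration.integral_diff)
  qed
  then have "(\<Sum>m\<in>M. A m * ln (A m / (mass g * pmf pq m))) + prior_psi g
      \<le> (\<Sum>m\<in>M. prior_psi (message_part i pq px m g))"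
    unfolding prior_psi_def sum_A sum_B A_def B_def
    by (simp add: sum.swap[of _ M] knower_part_message_part)
  moreover have "(\<Sum>m\<in>M. transcript_relent k (s @ [m]) (message_part i pq px m g)
      + prior_psi (message_part i pq px m g)) \<le> (\<Sum>m\<in>M. transcript_psi k (s @ [m]) (message_part i pq px m g))"
    by (rule sum_mono) (rule IH)
  ultimately show ?thesis
    unfolding transcript_relent_Suc[OF speaks assms(2-4)] transcript_psi_Suc[OF speaks] A_def
    by (simp add: sum.distrib)
qed

lemma transcript_invariant:
  assumes "c < 1" "weight g" "knowledge_bounded c k s g"
  shows "transcript_relent k s g + prior_psi g \<le> transcript_psi k s g"
  using assms(2,3)
proof (induction k arbitrary: s g)
  case 0
  then show ?case by (simp add: transcript_stop)
next
  case (Suc k)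
  show ?case
  proof (cases "\<pi> s")
    case None
    then show ?thesis by (simp add: transcript_stop)
  next
    case (Some a)
    then obtain i pq px where speaks: "\<pi> s = Some (i, pq, px)" by (cases a) auto
    show ?thesis
      using Suc.prems knowledge_bounded_message_part[OF speaks Suc.prems(2)]
      by (intro transcript_invariant_Suc[OF speaks assms(1)] Suc.IH weight_message_part)
  qed
qed

lemma transcript_relent_le:
  assumes "0 < c" "c < 1" "weight g" "knowledge_bounded c k s g"
    and prior: "\<And>j. j \<in> {1..n} \<Longrightarrow> mass (knower_part g j) = b * mass g"
  shows "transcript_relent k s g \<le> real n * mass g * (b / c * - ln (1 - c) + ln (1 - b))"
proof -
  have "transcript_psi k s g
      \<le> (\<Sum>t\<in>extensions M k s. \<Sum>j\<in>{1..n}. weighted_pmf (knower_part g j) k s t / c * - ln (1 - c))"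
    unfolding transcript_psi_def using assms(1-4)
    by (intro sum_mono psi_le_linear weighted_pmf_nonneg weight_knower_part)
      (auto simp: knowledge_bounded_def)
  also have "\<dots> = (\<Sum>j\<in>{1..n}. \<Sum>t\<in>extensions M k s. weighted_pmf (knower_part g j) k s t) / c * - ln (1 - c)"
    by (subst sum.swap) (simp only: sum_divide_distrib[symmetric] sum_distrib_right[symmetric])
  also have "\<dots> = (\<Sum>j\<in>{1..n}. mass (knower_part g j)) / c * - ln (1 - c)"
    using assms(3) by (simp add: sum_weighted_pmf weight_knower_part)
  finally have "transcript_psi k s g \<le> real n * b * mass g / c * - ln (1 - c)"
    by (simp add: prior)
  moreover have "prior_psi g = real n * (- mass g * ln (1 - b))"
    unfolding prior_psi_def by (simp add: prior psi_mult_left)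
  ultimately show ?thesis
    using transcript_invariant[OF assms(2-4)] by (simp add: algebra_simps)
qed

end

section \<open>The joint distribution of secret, knowledge and transcript\<close>

lemma valid_protocol_run:
  "valid_protocol n XS M N \<pi> \<Longrightarrow> x \<in> XS \<Longrightarrow> protocol_run \<pi> x n M"
  unfolding valid_protocol_def protocol_run_def by blast

lemma set_pmf_run_protocol_valid:
  "valid_protocol n XS M N \<pi> \<Longrightarrow> x \<in> XS \<Longrightarrow> set_pmf (run_protocol \<pi> x l N []) \<subseteq> extensions M N []"
  by (rule set_pmf_run_protocol_extensions) (auto simp: valid_protocol_def)

lemma measure_bind_pmf:
  "measure_pmf.prob (bind_pmf p f) A = (\<integral>x. measure_pmf.prob (f x) A \<partial>p)"
  unfolding measure_pmf_bind
  by (rule measure_pmf.measure_bind[where N="count_space UNIV"])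
    (auto simp: space_subprob_algebra measure_pmf_in_subprob_algebra
      intro: prob_space_imp_subprob_space measure_pmf.prob_space_axioms)

lemma prob_joint_XLT_secret_transcript:
  "measure_pmf.prob (joint_XLT D \<pi> N) {(x', l, t'). x' = x \<and> t' = t \<and> P l}
    = (\<integral>a. (if fst a = x \<and> P (snd a) then 1 else 0) * pmf (run_protocol \<pi> x (snd a) N []) t \<partial>D)"
  unfolding joint_XLT_def measure_bind_pmf
  by (intro Bochner_Integration.integral_cong) (auto simp: vimage_def measure_pmf_single)

lemma prob_secret_knowledge:
  "measure_pmf.prob D {(x', l). x' = x \<and> P l} = (\<integral>a. (if fst a = x \<and> P (snd a) then 1 else 0) \<partial>D)"
proof -
  have "(\<lambda>a. if fst a = x \<and> P (snd a) then 1 else 0 :: real) = indicator {(x', l). x' = x \<and> P l}"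
    by (auto simp: fun_eq_iff)
  then show ?thesis by simp
qed

lemma map_pmf_fst_joint_XLT: "map_pmf fst (joint_XLT D \<pi> N) = map_pmf fst D"
  unfolding joint_XLT_def map_bind_pmf map_pmf_def[of fst D]
  by (intro bind_pmf_cong) (auto simp: map_pmf_comp map_pmf_const)

lemma pmf_secret_transcript:
  "pmf (map_pmf (\<lambda>(x, l, t). (x, t)) J) (x, t) = measure_pmf.prob J {(x', l, t'). x' = x \<and> t' = t}"
  unfolding pmf_map by (auto intro: arg_cong[where f="measure_pmf.prob J"])

lemma pmf_fst_secret_transcript:
  "pmf (map_pmf fst (map_pmf (\<lambda>(x, l, t). (x, t)) (joint_XLT D \<pi> N))) x
    = measure_pmf.prob D {(x', l). x' = x}"
proof -
  have fst_proj: "(\<lambda>y. fst (case y of (x, l, t) \<Rightarrow> (x, t))) = fst" by auto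
  have marginal: "map_pmf fst (map_pmf (\<lambda>(x, l, t). (x, t)) (joint_XLT D \<pi> N)) = map_pmf fst D"
    unfolding map_pmf_comp fst_proj by (rule map_pmf_fst_joint_XLT)
  show ?thesis
    unfolding marginal pmf_map by (auto intro: arg_cong[where f="measure_pmf.prob D"])
qed

text \<open>When no player knows the secret, the secret argument of \<open>run_protocol\<close> is irrelevant
  (\<open>run_protocol_ignorant\<close>).\<close>
definition ignorant_transcript :: "('x, 'm) protocol \<Rightarrow> nat \<Rightarrow> 'm list pmf" where
  "ignorant_transcript \<pi> N = run_protocol \<pi> undefined (\<lambda>_. False) N []"

locale secret_run = protocol_run \<pi> x n M D snd
  for \<pi> :: "('x, 'm) protocol" and x n M and D :: "('x \<times> (nat \<Rightarrow> bool)) pmf"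
begin

definition secret_weight :: "'x \<times> (nat \<Rightarrow> bool) \<Rightarrow> real" where
  "secret_weight a = (if fst a = x then 1 else 0)"

lemma weight_secret_weight: "weight secret_weight"
  unfolding weight_def secret_weight_def by simp

lemma knower_part_secret_weight:
  "knower_part secret_weight j = (\<lambda>a. if fst a = x \<and> snd a j then 1 else 0)"
  unfolding knower_part_def secret_weight_def by auto

lemma weighted_pmf_secret_weight:
  "weighted_pmf secret_weight N [] t = measure_pmf.prob (joint_XLT D \<pi> N) {(x', l, t'). x' = x \<and> t' = t}"
  using prob_joint_XLT_secret_transcript[of D \<pi> N x t "\<lambda>_. True"]
  by (simp add: weighted_pmf_def secret_weight_def)

lemma weighted_pmf_knower_part_secret_weight:
  "weighted_pmf (knower_part secret_weight j) N [] t
    = measure_pmf.prob (joint_XLT D \<pi> N) {(x', l, t'). x' = x \<and> t' = t \<and> l j}"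
  unfolding knower_part_secret_weight weighted_pmf_def prob_joint_XLT_secret_transcript by simp

lemma mass_secret_weight: "mass secret_weight = measure_pmf.prob D {(x', l). x' = x}"
  using prob_secret_knowledge[of D x "\<lambda>_. True"] by (simp add: secret_weight_def)

lemma mass_knower_part_secret_weight:
  "mass (knower_part secret_weight j) = measure_pmf.prob D {(x', l). x' = x \<and> l j}"
  unfolding knower_part_secret_weight prob_secret_knowledge by simp

lemma knowledge_bounded_secret_weight:
  assumes "\<And>i t. i \<in> {1..n} \<Longrightarrow>
      measure_pmf.prob (joint_XLT D \<pi> N) {(x', l, t'). x' = x \<and> t' = t} > 0 \<Longrightarrow>
      measure_pmf.prob (joint_XLT D \<pi> N) {(x', l, t'). x' = x \<and> t' = t \<and> l i}
        / measure_pmf.prob (joint_XLT D \<pi> N) {(x', l, t'). x' = x \<and> t' = t} \<le> c"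
  shows "knowledge_bounded c N [] secret_weight"
  unfolding knowledge_bounded_def weighted_pmf_secret_weight weighted_pmf_knower_part_secret_weight
proof (intro ballI)
  let ?J = "joint_XLT D \<pi> N"
  fix t j assume "j \<in> {1..n}"
  show "measure_pmf.prob ?J {(x', l, t'). x' = x \<and> t' = t \<and> l j}
      \<le> c * measure_pmf.prob ?J {(x', l, t'). x' = x \<and> t' = t}"
  proof (cases "measure_pmf.prob ?J {(x', l, t'). x' = x \<and> t' = t} > 0")
    case True
    then show ?thesis using assms[OF \<open>j \<in> {1..n}\<close>] by (simp add: divide_le_eq)
  next
    case False
    then have "measure_pmf.prob ?J {(x', l, t'). x' = x \<and> t' = t} = 0"
      by (simp add: not_less measure_le_0_iff)
    moreover have "measure_pmf.prob ?J {(x', l, t'). x' = x \<and> t' = t \<and> l j}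
        \<le> measure_pmf.prob ?J {(x', l, t'). x' = x \<and> t' = t}"
      by (intro measure_pmf.finite_measure_mono) auto
    ultimately show ?thesis by simp
  qed
qed

end

lemma secret_transcript_relent_le:
  fixes D :: "('x \<times> (nat \<Rightarrow> bool)) pmf" and \<pi> :: "('x, 'm) protocol"
  assumes c: "0 < c" "c < 1"
    and valid: "valid_protocol n (fst ` set_pmf D) M N \<pi>" and x: "x \<in> fst ` set_pmf D"
    and prior: "\<And>i. i \<in> {1..n} \<Longrightarrow>
      measure_pmf.prob D {(x', l). x' = x \<and> l i} / measure_pmf.prob D {(x', l). x' = x} = b"
    and posterior: "\<And>i t. i \<in> {1..n} \<Longrightarrow>
      measure_pmf.prob (joint_XLT D \<pi> N) {(x', l, t'). x' = x \<and> t' = t} > 0 \<Longrightarrow>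
      measure_pmf.prob (joint_XLT D \<pi> N) {(x', l, t'). x' = x \<and> t' = t \<and> l i}
        / measure_pmf.prob (joint_XLT D \<pi> N) {(x', l, t'). x' = x \<and> t' = t} \<le> c"
  defines "P \<equiv> map_pmf (\<lambda>(x, l, t). (x, t)) (joint_XLT D \<pi> N)"
  shows "(\<Sum>t\<in>extensions M N []. pmf P (x, t)
      * ln (pmf P (x, t) / (pmf (map_pmf fst P) x * pmf (ignorant_transcript \<pi> N) t)))
    \<le> real n * pmf (map_pmf fst P) x * (b / c * - ln (1 - c) + ln (1 - b))"
    and "\<And>t. 0 < pmf P (x, t) \<Longrightarrow> 0 < pmf (ignorant_transcript \<pi> N) t"
proof -
  interpret secret_run \<pi> x n M D
    unfolding secret_run_def using valid x by (rule valid_protocol_run)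
  have P: "pmf P (x, t) = weighted_pmf secret_weight N [] t" for t
    unfolding P_def pmf_secret_transcript weighted_pmf_secret_weight ..
  have P_fst: "pmf (map_pmf fst P) x = mass secret_weight"
    unfolding P_def pmf_fst_secret_transcript mass_secret_weight ..
  have "0 < mass secret_weight"
    unfolding mass_secret_weight using x by (auto intro: measure_pmf_posI)
  then have prior_mass: "mass (knower_part secret_weight j) = b * mass secret_weight" if "j \<in> {1..n}" for j
    using prior[OF that] by (simp add: mass_knower_part_secret_weight mass_secret_weight divide_eq_eq)
  note bounded = knowledge_bounded_secret_weight[OF posterior]
  have Q: "ignorant_run N [] = ignorant_transcript \<pi> N"
    unfolding ignorant_transcript_def by (rule run_protocol_ignorant)
  show "(\<Sum>t\<in>extensions M N []. pmf P (x, t)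
      * ln (pmf P (x, t) / (pmf (map_pmf fst P) x * pmf (ignorant_transcript \<pi> N) t)))
    \<le> real n * pmf (map_pmf fst P) x * (b / c * - ln (1 - c) + ln (1 - b))"
    using transcript_relent_le[OF c weight_secret_weight bounded prior_mass]
    unfolding transcript_relent_def P P_fst Q by simp
  show "0 < pmf (ignorant_transcript \<pi> N) t" if "0 < pmf P (x, t)" for t
    using ignorant_run_pos[OF c(2) weight_secret_weight bounded] that unfolding P Q by simp
qed

lemma set_pmf_secret_transcript:
  assumes "valid_protocol n (fst ` set_pmf D) M N \<pi>"
  shows "set_pmf (map_pmf (\<lambda>(x, l, t). (x, t)) (joint_XLT D \<pi> N)) \<subseteq> fst ` set_pmf D \<times> extensions M N []"
  unfolding joint_XLT_def using set_pmf_run_protocol_valid[OF assms] by force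

theorem theorem3p5:
  fixes b c :: real and n N :: nat
    and D :: "('x \<times> (nat \<Rightarrow> bool)) pmf"
    and \<pi> :: "('x, 'm) protocol" and M :: "'m set"
  assumes "0 \<le> b" "b < 1" "0 < c" "c < 1"
    and "finite (fst ` set_pmf D)"
    and "valid_protocol n (fst ` set_pmf D) M N \<pi>"
    and "\<And>i x. i \<in> {1..n} \<Longrightarrow> x \<in> fst ` set_pmf D \<Longrightarrow>
           measure_pmf.prob D {(x', l). x' = x \<and> l i} / measure_pmf.prob D {(x', l). x' = x} = b"
    and "\<And>i x t. i \<in> {1..n} \<Longrightarrow>
           measure_pmf.prob (joint_XLT D \<pi> N) {(x', l, t'). x' = x \<and> t' = t} > 0 \<Longrightarrow>
           measure_pmf.prob (joint_XLT D \<pi> N) {(x', l, t'). x' = x \<and> t' = t \<and> l i}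
             / measure_pmf.prob (joint_XLT D \<pi> N) {(x', l, t'). x' = x \<and> t' = t} \<le> c"
  shows "mutual_info (map_pmf (\<lambda>(x, l, t). (x, t)) (joint_XLT D \<pi> N))
           \<le> (- b * log 2 (1 - c) + c * log 2 (1 - b)) / c * real n"
proof -
  define P where "P = map_pmf (\<lambda>(x, l, t). (x, t)) (joint_XLT D \<pi> N)"
  define K where "K = b / c * - ln (1 - c) + ln (1 - b)"
  let ?XS = "fst ` set_pmf D" and ?T = "extensions M N []" and ?Q = "ignorant_transcript \<pi> N"
  let ?relent = "\<lambda>x. \<Sum>t\<in>?T. pmf P (x, t) * ln (pmf P (x, t) / (pmf (map_pmf fst P) x * pmf ?Q t))"
  note per_secret = secret_transcript_relent_le[OF assms(3,4,6) _ assms(7) assms(8), folded P_def K_def]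
  have support: "set_pmf P \<subseteq> ?XS \<times> ?T"
    unfolding P_def by (rule set_pmf_secret_transcript[OF assms(6)])
  have "finite ?T"
    using assms(6) by (simp add: valid_protocol_def finite_extensions)
  have "mutual_info P
      \<le> (\<Sum>x\<in>?XS. \<Sum>t\<in>?T. pmf P (x, t) * log 2 (pmf P (x, t) / (pmf (map_pmf fst P) x * pmf ?Q t)))"
  proof (rule mutual_info_le_relent[OF assms(5) \<open>finite ?T\<close> support])
    fix x t assume "0 < pmf P (x, t)"
    then have "x \<in> ?XS" using support by (auto simp: set_pmf_eq')
    then show "0 < pmf ?Q t" using per_secret(2) \<open>0 < pmf P (x, t)\<close> by blast
  qed
  also have "\<dots> = (\<Sum>x\<in>?XS. ?relent x / ln 2)"
    by (simp add: log_def sum_divide_distrib)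
  also have "\<dots> \<le> (\<Sum>x\<in>?XS. real n * pmf (map_pmf fst P) x * K / ln 2)"
    using per_secret(1) by (intro sum_mono divide_right_mono) auto
  also have "\<dots> = real n * K / ln 2"
    using sum_pmf_eq_1[OF assms(5), of "map_pmf fst P"] support
    by (force simp flip: sum_divide_distrib sum_distrib_left sum_distrib_right)
  also have "\<dots> = (- b * log 2 (1 - c) + c * log 2 (1 - b)) / c * real n"
    unfolding K_def log_def using assms(3) by (simp add: field_simps)
  finally show ?thesis unfolding P_def .
qed

end
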